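(* Let $m\ge 1$ and $x\in RF(m)$. Then for every choice, for each $k\in\{1,\dots,m-1\}$, of one of the two forms $[\omega,x_k]$ or $[x_k,\omega]$, there exist integers $\alpha_1,\dots,\alpha_m$ and elements $\omega_1,\dots,\omega_{m-1}\in RF(m)$ such that $$x=x_m^{\alpha_m}x_{m-1}^{\alpha_{m-1}}\cdots x_1^{\alpha_1}\,z_1z_2\cdots z_{m-1},$$ where $z_k=[\omega_k,x_k]$ or $z_k=[x_k,\omega_k]$ according to the chosen form.
   Context: $RF(m)$ is the reduced free group on $x_1,\dots,x_m$: the quotient of the free group $F(x_1,\dots,x_m)$ by the relations that each $x_i$ commutes with every conjugate $\gamma x_i\gamma^{-1}$ of itself. Commutators are $[g,h]=g^{-1}h^{-1}gh$. *)

theory Defs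
  imports Main
begin

text \<open>Words in the generators x_i and their inverses: a letter (i, False) is x_i,
  a letter (i, True) is x_i^{-1}.  Elements of RF(m) are represented by words over
  the alphabet {1..m}, modulo the congruence rf_eq m defined below.\<close>

type_synonym word = "(nat \<times> bool) list"

definition alphabet :: "nat \<Rightarrow> word \<Rightarrow> bool" where
  "alphabet m w \<longleftrightarrow> (\<forall>(i, b) \<in> set w. 1 \<le> i \<and> i \<le> m)"

definition inv_word :: "word \<Rightarrow> word" where
  "inv_word w = rev (map (\<lambda>(i, b). (i, \<not> b)) w)"

definition gen :: "nat \<Rightarrow> word" where
  "gen i = [(i, False)]"

text \<open>The defining congruence of RF(m): free reduction, plus x_i commutes with
  every conjugate g x_i g^{-1}.\<close>

inductive rf_eq :: "nat \<Rightarrow> word \<Rightarrow> word \<Rightarrow> bool" for m :: nat where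
  rf_refl: "rf_eq m w w"
| rf_sym: "rf_eq m u v \<Longrightarrow> rf_eq m v u"
| rf_trans: "rf_eq m u v \<Longrightarrow> rf_eq m v w \<Longrightarrow> rf_eq m u w"
| rf_cancel: "alphabet m u \<Longrightarrow> alphabet m v \<Longrightarrow> 1 \<le> i \<Longrightarrow> i \<le> m \<Longrightarrow>
    rf_eq m (u @ [(i, b), (i, \<not> b)] @ v) (u @ v)"
| rf_rel: "alphabet m u \<Longrightarrow> alphabet m v \<Longrightarrow> alphabet m g \<Longrightarrow> 1 \<le> i \<Longrightarrow> i \<le> m \<Longrightarrow>
    rf_eq m (u @ gen i @ (g @ gen i @ inv_word g) @ v)
            (u @ (g @ gen i @ inv_word g) @ gen i @ v)"

definition gpow :: "nat \<Rightarrow> int \<Rightarrow> word" where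
  "gpow i a = (if 0 \<le> a then replicate (nat a) (i, False) else replicate (nat (- a)) (i, True))"

definition comm :: "word \<Rightarrow> word \<Rightarrow> word" where
  "comm g h = inv_word g @ inv_word h @ g @ h"

end

theory Submission
  imports Defs
begin

text \<open>Modulo the normal closure N of x_m in RF(m) every element lies in RF(m-1),
  so x = y e with e in N and y in normal form for m - 1. Since the conjugates of x_m commute, N is
  abelian. Putting a power of x_m in front of y and replacing each \<omega>_k by \<omega>_k v_k with v_k in N
  changes y by the elements of a subgroup J of N, and it remains to show J = N. To this end one
  descends along N = U_0 \<supseteq> U_1 \<supseteq> ..., U_{r+1} = [U_r, RF(m)]: since U_r is generated by
  elements lying in the normal closures of x_m and of r further generators, U_m = 1; and if U_{r+2}
  is contained in J then so is U_r, because modulo U_{r+2} the change caused by v_k = e in U_r is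
  the commutator of e with x_k, up to sign.\<close>

section \<open>Commutator calculus\<close>

declare add_uminus_conv_diff [simp del]

definition conjugate :: "'a::group_add \<Rightarrow> 'a \<Rightarrow> 'a" where
  "conjugate a h = - h + a + h"

definition commutator :: "'a::group_add \<Rightarrow> 'a \<Rightarrow> 'a" where
  "commutator a b = - a + - b + a + b"

lemmas group_add_normalize = add.assoc minus_add diff_conv_add_uminus

lemma conjugate_add: "conjugate (a + b) h = conjugate a h + conjugate b h"
  by (simp add: conjugate_def group_add_normalize)

lemma conjugate_minus: "conjugate (- a) h = - conjugate a h"
  by (simp add: conjugate_def group_add_normalize)

lemma conjugate_0 [simp]: "conjugate 0 h = 0"
  by (simp add: conjugate_def)

lemma conjugate_by_0 [simp]: "conjugate a 0 = a"
  by (simp add: conjugate_def)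

lemma conjugate_conjugate: "conjugate (conjugate a h) h' = conjugate a (h + h')"
  by (simp add: conjugate_def group_add_normalize)

lemma conjugate_eq_add_commutator: "conjugate a h = a + commutator a h"
  by (simp add: conjugate_def commutator_def group_add_normalize)

lemma commutator_conv_conjugate: "commutator a h = - a + conjugate a h"
  by (simp add: conjugate_def commutator_def group_add_normalize)

lemma add_conjugate: "a + h = h + conjugate a h"
  by (simp add: conjugate_def group_add_normalize)

lemma conjugate_eq_self: "a + h = h + a \<Longrightarrow> conjugate a h = a"
  by (metis add_conjugate add_left_cancel)

lemma conjugate_commutator:
  "conjugate (commutator a b) h = commutator (conjugate a h) (conjugate b h)"
  by (simp add: conjugate_def commutator_def group_add_normalize)

lemma commutator_swap: "commutator a b = - commutator b a"
  by (simp add: commutator_def group_add_normalize)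

lemma commutator_0_left [simp]: "commutator 0 a = 0"
  and commutator_0_right [simp]: "commutator a 0 = 0"
  by (simp_all add: commutator_def)

lemma commutator_eq_0: "a + b = b + a \<Longrightarrow> commutator a b = 0"
  by (simp add: commutator_def group_add_normalize)

lemma commutator_add_left:
  "commutator (a + b) y = conjugate (commutator a y) b + commutator b y"
  by (simp add: conjugate_def commutator_def group_add_normalize)

lemma commutator_add_right:
  "commutator a (y + y') = commutator a y + commutator (conjugate a y) y'"
  by (simp add: conjugate_def commutator_def group_add_normalize)

lemma commutator_add_right':
  "commutator a (y + y') = commutator a y' + conjugate (commutator a y) y'"
  by (simp add: conjugate_def commutator_def group_add_normalize)

lemma commutator_minus_right: "commutator a (- y) = - commutator (conjugate a (- y)) y"
  by (simp add: conjugate_def commutator_def group_add_normalize)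

lemma commutator_conjugate_commutator:
  "commutator (conjugate f (b + a)) (commutator a b) =
     - commutator (commutator f b) a + commutator (commutator f b) (commutator f a) +
     commutator (commutator f a) b"
  by (simp add: conjugate_def commutator_def group_add_normalize)

lemma sum_list_add_conjugate:
  "sum_list (map (\<lambda>k. f k + h k) [a..<b]) =
     sum_list (map f [a..<b]) +
     sum_list (map (\<lambda>k. conjugate (h k) (sum_list (map f [Suc k..<b]))) [a..<b])"
proof (induction "b - a" arbitrary: a)
  case 0
  then show ?case by simp
next
  case (Suc d)
  then have "[a..<b] = a # [Suc a..<b]" and "d = b - Suc a"
    by (auto simp: upt_conv_Cons)
  moreover note Suc.hyps(1) [of "Suc a"]
  ultimately show ?case
    by (simp add: add.assoc) (simp add: add.assoc [symmetric] add_conjugate [of "h a"])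
qed

lemma sum_list_map_single:
  assumes "distinct xs" and "k \<in> set xs" and "\<And>i. i \<in> set xs \<Longrightarrow> i \<noteq> k \<Longrightarrow> f i = 0"
  shows "sum_list (map f xs) = f k"
  using assms
proof (induction xs)
  case (Cons x xs)
  show ?case
  proof (cases "x = k")
    case True
    with Cons.prems have "\<forall>i\<in>set xs. f i = 0" by auto
    then have "sum_list (map f xs) = 0" by (induction xs) auto
    with True show ?thesis by simp
  next
    case False
    with Cons show ?thesis by simp
  qed
qed simp

lemma commute_sum_list:
  "(\<And>k. k \<in> set xs \<Longrightarrow> a + f k = f k + a) \<Longrightarrow> a + sum_list (map f xs) = sum_list (map f xs) + a"
proof (induction xs)
  case (Cons x xs)
  have "a + (f x + sum_list (map f xs)) = f x + (a + sum_list (map f xs))"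
    using Cons.prems by (simp add: add.assoc [symmetric])
  also have "\<dots> = f x + sum_list (map f xs) + a"
    using Cons by (simp add: add.assoc)
  finally show ?case by simp
qed simp

lemma sum_list_add_commuting:
  assumes "\<And>k l. k \<in> set xs \<Longrightarrow> l \<in> set xs \<Longrightarrow> g k + f l = f l + g k"
  shows "sum_list (map (\<lambda>k. f k + g k) xs) = sum_list (map f xs) + sum_list (map g xs)"
  using assms
proof (induction xs)
  case (Cons x xs)
  have "g x + sum_list (map f xs) = sum_list (map f xs) + g x"
    by (rule commute_sum_list) (use Cons.prems in auto)
  with Cons show ?case by (simp add: add.assoc [symmetric]) (simp add: add.assoc)
qed simp

definition subgroup :: "'a::group_add set \<Rightarrow> bool" where
  "subgroup T \<longleftrightarrow> 0 \<in> T \<and> (\<forall>a\<in>T. \<forall>b\<in>T. a + b \<in> T) \<and> (\<forall>a\<in>T. - a \<in> T)"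

lemma subgroupI:
  "0 \<in> T \<Longrightarrow> (\<And>a b. a \<in> T \<Longrightarrow> b \<in> T \<Longrightarrow> a + b \<in> T) \<Longrightarrow> (\<And>a. a \<in> T \<Longrightarrow> - a \<in> T)
    \<Longrightarrow> subgroup T"
  by (simp add: subgroup_def)

lemma subgroup_0 [simp]: "subgroup T \<Longrightarrow> 0 \<in> T"
  and subgroup_add [simp]: "subgroup T \<Longrightarrow> a \<in> T \<Longrightarrow> b \<in> T \<Longrightarrow> a + b \<in> T"
  and subgroup_minus [simp]: "subgroup T \<Longrightarrow> a \<in> T \<Longrightarrow> - a \<in> T"
  by (simp_all add: subgroup_def)

lemma subgroup_conjugate [simp]:
  "subgroup T \<Longrightarrow> a \<in> T \<Longrightarrow> h \<in> T \<Longrightarrow> conjugate a h \<in> T"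
  by (simp add: conjugate_def)

lemma subgroup_commutator [simp]:
  "subgroup T \<Longrightarrow> a \<in> T \<Longrightarrow> b \<in> T \<Longrightarrow> commutator a b \<in> T"
  by (simp add: commutator_def)

lemma subgroup_sum_list:
  "subgroup T \<Longrightarrow> (\<And>k. k \<in> set xs \<Longrightarrow> f k \<in> T) \<Longrightarrow> sum_list (map f xs) \<in> T"
  by (induction xs) auto

inductive_set subgroup_generated :: "'a::group_add set \<Rightarrow> 'a set" for S where
  zero: "0 \<in> subgroup_generated S"
| gen_add: "s \<in> S \<Longrightarrow> a \<in> subgroup_generated S \<Longrightarrow> s + a \<in> subgroup_generated S"
| gen_minus_add: "s \<in> S \<Longrightarrow> a \<in> subgroup_generated S \<Longrightarrow> - s + a \<in> subgroup_generated S"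

lemma subgroup_generated_add:
  "a \<in> subgroup_generated S \<Longrightarrow> b \<in> subgroup_generated S \<Longrightarrow> a + b \<in> subgroup_generated S"
  by (induction rule: subgroup_generated.induct)
    (auto simp: add.assoc intro: subgroup_generated.intros)

lemma subgroup_generated_base: "s \<in> S \<Longrightarrow> s \<in> subgroup_generated S"
  using subgroup_generated.gen_add [OF _ subgroup_generated.zero] by fastforce

lemma subgroup_generated_minus: "a \<in> subgroup_generated S \<Longrightarrow> - a \<in> subgroup_generated S"
proof (induction rule: subgroup_generated.induct)
  case zero
  show ?case by (simp add: subgroup_generated.zero)
next
  case (gen_add s a)
  have "- s + 0 \<in> subgroup_generated S"
    using gen_add.hyps(1) subgroup_generated.zero by (rule subgroup_generated.gen_minus_add)
  then have "- a + - s \<in> subgroup_generated S"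
    using gen_add.IH subgroup_generated_add by simp
  then show ?case by (simp only: minus_add)
next
  case (gen_minus_add s a)
  then have "- a + - (- s) \<in> subgroup_generated S"
    by (simp only: minus_minus subgroup_generated_add subgroup_generated_base)
  then show ?case by (simp only: minus_add)
qed

lemma subgroup_subgroup_generated [simp]: "subgroup (subgroup_generated S)"
  by (rule subgroupI) (simp_all add: subgroup_generated.zero subgroup_generated_add subgroup_generated_minus)

lemma subgroup_generated_minimal:
  assumes "subgroup T" and "S \<subseteq> T"
  shows "subgroup_generated S \<subseteq> T"
proof
  fix a assume "a \<in> subgroup_generated S"
  then show "a \<in> T"
    by (induction rule: subgroup_generated.induct) (use assms in auto)
qed

lemma subgroup_generated_mono: "S \<subseteq> S' \<Longrightarrow> subgroup_generated S \<subseteq> subgroup_generated S'"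
  by (rule subgroup_generated_minimal) (auto intro: subgroup_generated_base)

lemma subgroup_generated_empty [simp]: "subgroup_generated {} = {0}"
proof -
  have "subgroup_generated {} \<subseteq> {0::'a}"
    by (rule subgroup_generated_minimal) (auto intro: subgroupI)
  then show ?thesis using subgroup_generated.zero by blast
qed

lemma commute_subgroup_generated:
  assumes "\<And>s. s \<in> S \<Longrightarrow> a + s = s + a" and "b \<in> subgroup_generated S"
  shows "a + b = b + a"
proof -
  have "subgroup {b. a + b = b + a}"
  proof (rule subgroupI)
    fix x assume "x \<in> {b. a + b = b + a}"
    then have "- x + (a + x) + - x = - x + (x + a) + - x" by simp
    then show "- x \<in> {b. a + b = b + a}" by (simp add: add.assoc)
  next
    fix x y assume "x \<in> {b. a + b = b + a}" "y \<in> {b. a + b = b + a}"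
    then show "x + y \<in> {b. a + b = b + a}"
      by (simp add: add.assoc [symmetric]) (simp add: add.assoc)
  qed simp
  then have "subgroup_generated S \<subseteq> {b. a + b = b + a}"
    by (rule subgroup_generated_minimal) (use assms(1) in blast)
  with assms(2) show ?thesis by blast
qed
section \<open>The reduced free group on all indices\<close>

text \<open>The groups RF(m) are realised as subgroups of a single group, the quotient of words over all
  indices by rf_cong. Erasing the letters outside {1..m} turns its relations into those of
  RF(m), so equality in the big group implies rf_eq m for words over {1..m}.\<close>

inductive rf_cong :: "word \<Rightarrow> word \<Rightarrow> bool" where
  refl: "rf_cong w w"
| sym: "rf_cong u v \<Longrightarrow> rf_cong v u"
| trans: "rf_cong u v \<Longrightarrow> rf_cong v w \<Longrightarrow> rf_cong u w"
| cancel: "rf_cong (u @ [(i, b), (i, \<not> b)] @ v) (u @ v)"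
| rel: "rf_cong (u @ gen i @ (g @ gen i @ inv_word g) @ v) (u @ (g @ gen i @ inv_word g) @ gen i @ v)"

declare rf_cong.trans [trans]

lemma equivp_rf_cong: "equivp rf_cong"
  by (rule equivpI) (auto simp: reflp_def symp_def transp_def intro: rf_cong.intros)

lemma rf_cong_append: "rf_cong u v \<Longrightarrow> rf_cong (p @ u @ q) (p @ v @ q)"
proof (induction rule: rf_cong.induct)
  case (cancel u i b v)
  show ?case using rf_cong.cancel [of "p @ u" i b "v @ q"] by simp
next
  case (rel u i g v)
  show ?case using rf_cong.rel [of "p @ u" i g "v @ q"] by simp
next
  case (sym u v)
  from sym.IH show ?case by (rule rf_cong.sym)
next
  case (trans u v w)
  from trans.IH show ?case by (rule rf_cong.trans)
qed (rule rf_cong.refl)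

lemma rf_cong_append_left: "rf_cong u v \<Longrightarrow> rf_cong (p @ u) (p @ v)"
  and rf_cong_append_right: "rf_cong u v \<Longrightarrow> rf_cong (u @ q) (v @ q)"
  using rf_cong_append [of u v p "[]"] rf_cong_append [of u v "[]" q] by simp_all

lemma inv_word_Nil [simp]: "inv_word [] = []"
  and inv_word_Cons [simp]: "inv_word (a # u) = inv_word u @ [(fst a, \<not> snd a)]"
  and inv_word_append [simp]: "inv_word (u @ v) = inv_word v @ inv_word u"
  by (simp_all add: inv_word_def split: prod.split)

lemma inv_word_inv_word [simp]: "inv_word (inv_word u) = u"
  by (induction u) auto

lemma rf_cong_append_inv_word: "rf_cong (w @ inv_word w) []"
proof (induction w)
  case Nil
  show ?case by (simp add: rf_cong.refl)
next
  case (Cons a w)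
  obtain i b where a: "a = (i, b)" by fastforce
  have "rf_cong ([(i, b)] @ (w @ inv_word w) @ [(i, \<not> b)]) ([(i, b)] @ [] @ [(i, \<not> b)])"
    using Cons.IH by (rule rf_cong_append)
  moreover have "rf_cong ([] @ [(i, b), (i, \<not> b)] @ []) ([] @ [])"
    by (rule rf_cong.cancel)
  ultimately show ?case using a by (auto intro: rf_cong.trans)
qed

lemma rf_cong_inv_word_append: "rf_cong (inv_word w @ w) []"
  using rf_cong_append_inv_word [of "inv_word w"] by simp

lemma rf_cong_inv_word: "rf_cong u v \<Longrightarrow> rf_cong (inv_word u) (inv_word v)"
proof (induction rule: rf_cong.induct)
  case (cancel u i b v)
  show ?case using rf_cong.cancel [of "inv_word v" i b "inv_word u"] by simp
next
  case (rel u i g v)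
  txt \<open>(x c)^-1 and (c x)^-1 are congruent because x c and c x are.\<close>
  define c where "c = g @ gen i @ inv_word g"
  define L where "L = inv_word (gen i @ c)"
  define R where "R = inv_word (c @ gen i)"
  have "rf_cong (L @ (c @ gen i) @ R) L"
    using rf_cong_append_left [OF rf_cong_append_inv_word [of "c @ gen i"], of L]
    by (simp only: R_def append_Nil2 append_assoc)
  then have "rf_cong L (L @ (c @ gen i) @ R)"
    by (rule rf_cong.sym)
  also have "rf_cong (L @ (gen i @ c) @ R) (L @ (c @ gen i) @ R)"
    using rf_cong.rel [of L i g R] by (simp only: c_def append_assoc)
  then have "rf_cong (L @ (c @ gen i) @ R) (L @ (gen i @ c) @ R)"
    by (rule rf_cong.sym)
  also have "rf_cong (L @ (gen i @ c) @ R) R"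
    using rf_cong_append_right [OF rf_cong_inv_word_append [of "gen i @ c"], of R]
    by (simp only: L_def append_Nil append_assoc)
  finally have "rf_cong (inv_word v @ L @ inv_word u) (inv_word v @ R @ inv_word u)"
    by (rule rf_cong_append)
  then show ?case
    by (simp add: L_def R_def c_def gen_def)
next
  case (sym u v)
  from sym.IH show ?case by (rule rf_cong.sym)
next
  case (trans u v w)
  from trans.IH show ?case by (rule rf_cong.trans)
qed (rule rf_cong.refl)

quotient_type rfgroup = word / rf_cong
  by (rule equivp_rf_cong)

instantiation rfgroup :: group_add
begin

lift_definition zero_rfgroup :: rfgroup is "[]" .

lift_definition plus_rfgroup :: "rfgroup \<Rightarrow> rfgroup \<Rightarrow> rfgroup" is "(@)"
  by (metis rf_cong_append_left rf_cong_append_right rf_cong.trans)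

lift_definition uminus_rfgroup :: "rfgroup \<Rightarrow> rfgroup" is inv_word
  by (rule rf_cong_inv_word)

lift_definition minus_rfgroup :: "rfgroup \<Rightarrow> rfgroup \<Rightarrow> rfgroup" is "\<lambda>u v. u @ inv_word v"
  by (metis rf_cong_append_left rf_cong_append_right rf_cong.trans rf_cong_inv_word)

instance
proof
  fix a b c :: rfgroup
  show "a + b + c = a + (b + c)" by transfer (simp add: rf_cong.refl)
  show "0 + a = a" by transfer (simp add: rf_cong.refl)
  show "a + 0 = a" by transfer (simp add: rf_cong.refl)
  show "- a + a = 0" by transfer (rule rf_cong_inv_word_append)
  show "a + - b = a - b" by transfer (simp add: rf_cong.refl)
qed

end

lemma abs_rfgroup_append: "abs_rfgroup (u @ v) = abs_rfgroup u + abs_rfgroup v"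
  by (simp add: plus_rfgroup.abs_eq)

lemma abs_rfgroup_inv_word: "abs_rfgroup (inv_word u) = - abs_rfgroup u"
  by (simp add: uminus_rfgroup.abs_eq)

lemma abs_rfgroup_Nil: "abs_rfgroup [] = 0"
  by (simp add: zero_rfgroup.abs_eq)

lemma abs_rfgroup_concat: "abs_rfgroup (concat ws) = sum_list (map abs_rfgroup ws)"
  by (induction ws) (simp_all add: abs_rfgroup_Nil abs_rfgroup_append)

lemma abs_rfgroup_comm: "abs_rfgroup (comm u v) = commutator (abs_rfgroup u) (abs_rfgroup v)"
  by (simp add: comm_def abs_rfgroup_append abs_rfgroup_inv_word commutator_def add.assoc)

definition restrict_word :: "nat \<Rightarrow> word \<Rightarrow> word" where
  "restrict_word m w = filter (\<lambda>(i, b). 1 \<le> i \<and> i \<le> m) w"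

lemma alphabet_restrict_word: "alphabet m (restrict_word m w)"
  by (auto simp: alphabet_def restrict_word_def)

lemma restrict_word_id: "alphabet m w \<Longrightarrow> restrict_word m w = w"
  by (auto simp: alphabet_def restrict_word_def intro!: filter_True)

lemma restrict_word_append [simp]:
  "restrict_word m (u @ v) = restrict_word m u @ restrict_word m v"
  by (simp add: restrict_word_def)

lemma restrict_word_inv_word [simp]: "restrict_word m (inv_word w) = inv_word (restrict_word m w)"
  by (induction w) (auto simp: restrict_word_def)

lemma restrict_word_letter:
  "restrict_word m [(i, b)] = (if 1 \<le> i \<and> i \<le> m then [(i, b)] else [])"
  by (simp add: restrict_word_def)

lemma rf_cong_restrict_word: "rf_cong u v \<Longrightarrow> rf_eq m (restrict_word m u) (restrict_word m v)"
proof (induction rule: rf_cong.induct)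
  case (cancel u i b v)
  have "[(i, b), (i, \<not> b)] = [(i, b)] @ [(i, \<not> b)]" by simp
  then show ?case
    using rf_cancel [of m "restrict_word m u" "restrict_word m v" i b] alphabet_restrict_word
    by (simp only: restrict_word_append restrict_word_letter) (auto simp: rf_refl)
next
  case (rel u i g v)
  show ?case
  proof (cases "1 \<le> i \<and> i \<le> m")
    case True
    then have "restrict_word m (gen i) = gen i"
      by (simp add: gen_def restrict_word_letter)
    then show ?thesis
      using rf_rel [of m "restrict_word m u" "restrict_word m v" "restrict_word m g" i] True
      by (simp add: alphabet_restrict_word)
  next
    case False
    then have "restrict_word m (gen i) = []"
      by (auto simp: gen_def restrict_word_letter)
    then show ?thesis by (simp add: rf_refl)
  qed
next
  case (sym u v)
  from sym.IH show ?case by (rule rf_sym)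
next
  case (trans u v w)
  from trans.IH show ?case by (rule rf_trans)
qed (rule rf_refl)

lemma rf_eq_if_abs_rfgroup_eq:
  assumes "alphabet m u" and "alphabet m v" and "abs_rfgroup u = abs_rfgroup v"
  shows "rf_eq m u v"
proof -
  have "rf_cong u v" using assms(3) by (simp only: rfgroup.abs_eq_iff)
  from rf_cong_restrict_word [OF this, of m] show ?thesis
    by (simp only: restrict_word_id assms(1,2))
qed

section \<open>The subgroups RF(m) and the normal closures of the generators\<close>

definition X :: "nat \<Rightarrow> rfgroup" where
  "X k = abs_rfgroup (gen k)"

definition RF :: "nat \<Rightarrow> rfgroup set" where
  "RF m = abs_rfgroup ` {w. alphabet m w}"

lemma abs_rfgroup_Cons:
  "abs_rfgroup (a # w) = (if snd a then - X (fst a) else X (fst a)) + abs_rfgroup w"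
proof -
  have "abs_rfgroup [a] = (if snd a then - X (fst a) else X (fst a))"
    using abs_rfgroup_inv_word [of "gen (fst a)"] by (cases a) (auto simp: X_def gen_def inv_word_def)
  then show ?thesis
    using abs_rfgroup_append [of "[a]" w] by simp
qed

lemma X_commute_conjugate: "X i + conjugate (X i) h = conjugate (X i) h + X i"
proof -
  have "\<exists>g. abs_rfgroup g = - h"
    by (rule rfgroup.abs_induct [where x = "- h"]) blast
  then obtain g where g: "abs_rfgroup g = - h" ..
  have "abs_rfgroup ([] @ gen i @ (g @ gen i @ inv_word g) @ []) =
      abs_rfgroup ([] @ (g @ gen i @ inv_word g) @ gen i @ [])"
    using rf_cong.rel [of "[]" i g "[]"] rfgroup.abs_eq_iff by blast
  then show ?thesis
    using g by (simp add: abs_rfgroup_append abs_rfgroup_inv_word X_def [symmetric] conjugate_def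
        add.assoc)
qed

lemma subgroup_RF [simp]: "subgroup (RF m)"
proof (rule subgroupI)
  show "0 \<in> RF m"
    unfolding RF_def using abs_rfgroup_Nil by (force simp: alphabet_def)
next
  fix a b assume "a \<in> RF m" "b \<in> RF m"
  then obtain u v where "alphabet m u" "alphabet m v" "a = abs_rfgroup u" "b = abs_rfgroup v"
    unfolding RF_def by auto
  then have "alphabet m (u @ v)" "a + b = abs_rfgroup (u @ v)"
    by (auto simp: alphabet_def abs_rfgroup_append)
  then show "a + b \<in> RF m" unfolding RF_def by blast
next
  fix a assume "a \<in> RF m"
  then show "- a \<in> RF m"
    unfolding RF_def by (force simp: alphabet_def inv_word_def abs_rfgroup_inv_word [symmetric])
qed

lemma X_in_RF [simp]: "1 \<le> k \<Longrightarrow> k \<le> m \<Longrightarrow> X k \<in> RF m"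
  unfolding RF_def X_def by (force simp: alphabet_def gen_def)

lemma RF_mono: "n \<le> m \<Longrightarrow> RF n \<subseteq> RF m"
  unfolding RF_def by (force simp: alphabet_def)

lemma RF_induct [consumes 1, case_names zero plus minus]:
  assumes "h \<in> RF m" and "P 0"
    and "\<And>k h. 1 \<le> k \<Longrightarrow> k \<le> m \<Longrightarrow> h \<in> RF m \<Longrightarrow> P h \<Longrightarrow> P (X k + h)"
    and "\<And>k h. 1 \<le> k \<Longrightarrow> k \<le> m \<Longrightarrow> h \<in> RF m \<Longrightarrow> P h \<Longrightarrow> P (- X k + h)"
  shows "P h"
proof -
  obtain w where w: "alphabet m w" "h = abs_rfgroup w"
    using assms(1) unfolding RF_def by auto
  have "P (abs_rfgroup w)" using w(1)
  proof (induction w)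
    case Nil
    then show ?case using assms(2) abs_rfgroup_Nil by simp
  next
    case (Cons a w)
    then have a: "1 \<le> fst a" "fst a \<le> m" and "alphabet m w"
      by (auto simp: alphabet_def)
    moreover from \<open>alphabet m w\<close> have "abs_rfgroup w \<in> RF m"
      unfolding RF_def by blast
    ultimately show ?case
      using assms(3,4) Cons.IH by (simp add: abs_rfgroup_Cons)
  qed
  then show ?thesis using w by simp
qed

lemma RF_0: "RF 0 = {0}"
proof -
  have "h = 0" if "h \<in> RF 0" for h
    using that by (induction rule: RF_induct) auto
  then show ?thesis by auto
qed

lemma commutator_RF_memI:
  assumes "y \<in> RF m" and "e \<in> E" and "subgroup T"
    and conjugate_closed: "\<And>e h. e \<in> E \<Longrightarrow> h \<in> RF m \<Longrightarrow> conjugate e h \<in> E"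
    and generators: "\<And>e k. e \<in> E \<Longrightarrow> 1 \<le> k \<Longrightarrow> k \<le> m \<Longrightarrow> commutator e (X k) \<in> T"
  shows "commutator e y \<in> T"
  using assms(1,2)
proof (induction arbitrary: e rule: RF_induct)
  case zero
  show ?case using \<open>subgroup T\<close> by simp
next
  case (plus k h)
  then have "commutator e (X k) \<in> T" and "commutator (conjugate e (X k)) h \<in> T"
    by (simp_all add: generators conjugate_closed)
  then show ?case
    using \<open>subgroup T\<close> by (simp add: commutator_add_right)
next
  case (minus k h)
  then have "conjugate e (- X k) \<in> E"
    by (simp add: conjugate_closed)
  with minus have "commutator (conjugate e (- X k)) (X k) \<in> T"
    and "commutator (conjugate e (- X k)) h \<in> T"
    by (simp_all add: generators)
  then show ?case
    using \<open>subgroup T\<close> by (simp add: commutator_add_right commutator_minus_right)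
qed

definition ncl :: "nat \<Rightarrow> nat \<Rightarrow> rfgroup set" where
  "ncl m k = subgroup_generated {conjugate (X k) h | h. h \<in> RF m}"

lemma subgroup_ncl [simp]: "subgroup (ncl m k)"
  by (simp add: ncl_def)

lemma conjugate_X_in_ncl: "h \<in> RF m \<Longrightarrow> conjugate (X k) h \<in> ncl m k"
  unfolding ncl_def by (rule subgroup_generated_base) blast

lemma X_in_ncl [simp]: "X k \<in> ncl m k"
  using conjugate_X_in_ncl [of 0 m k] by simp

lemma ncl_subset_RF: "1 \<le> k \<Longrightarrow> k \<le> m \<Longrightarrow> ncl m k \<subseteq> RF m"
  unfolding ncl_def by (rule subgroup_generated_minimal) auto

lemma conjugate_in_ncl [simp]: "a \<in> ncl m k \<Longrightarrow> h \<in> RF m \<Longrightarrow> conjugate a h \<in> ncl m k"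
proof -
  assume "a \<in> ncl m k" and h: "h \<in> RF m"
  have "subgroup {a. conjugate a h \<in> ncl m k}"
    by (rule subgroupI) (simp_all add: conjugate_add conjugate_minus)
  moreover have "{conjugate (X k) h' | h'. h' \<in> RF m} \<subseteq> {a. conjugate a h \<in> ncl m k}"
    using h by (auto simp: conjugate_conjugate intro!: conjugate_X_in_ncl)
  ultimately have "ncl m k \<subseteq> {a. conjugate a h \<in> ncl m k}"
    unfolding ncl_def [of m k] by (rule subgroup_generated_minimal)
  with \<open>a \<in> ncl m k\<close> show ?thesis by blast
qed

lemma commutator_in_ncl_left [simp]: "a \<in> ncl m k \<Longrightarrow> h \<in> RF m \<Longrightarrow> commutator a h \<in> ncl m k"
  by (simp add: commutator_conv_conjugate)

lemma commutator_in_ncl_right [simp]: "a \<in> ncl m k \<Longrightarrow> h \<in> RF m \<Longrightarrow> commutator h a \<in> ncl m k"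
  by (simp add: commutator_swap [of h a])

text \<open>This is where the defining relations of the reduced free group enter.\<close>

lemma ncl_commute:
  assumes "a \<in> ncl m k" and "b \<in> ncl m k"
  shows "a + b = b + a"
proof -
  define S where "S = {conjugate (X k) h | h. h \<in> RF m}"
  have generators_commute: "s + t = t + s" if "s \<in> S" "t \<in> S" for s t
  proof -
    obtain h h' where s: "s = conjugate (X k) h" and t: "t = conjugate (X k) h'"
      using \<open>s \<in> S\<close> \<open>t \<in> S\<close> unfolding S_def by blast
    have "conjugate (X k + conjugate (X k) (h' + - h)) h =
        conjugate (conjugate (X k) (h' + - h) + X k) h"
      by (simp only: X_commute_conjugate)
    then show ?thesis
      using s t by (simp add: conjugate_add conjugate_conjugate add.assoc)
  qed
  have a: "a \<in> subgroup_generated S" and b: "b \<in> subgroup_generated S"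
    using assms by (simp_all add: ncl_def S_def)
  have "a + t = t + a" if "t \<in> S" for t
    using generators_commute [OF that] a by (rule commute_subgroup_generated [symmetric])
  then show ?thesis
    using b by (rule commute_subgroup_generated)
qed

lemma ncl_add_left_commute: "a \<in> ncl m k \<Longrightarrow> b \<in> ncl m k \<Longrightarrow> a + (b + c) = b + (a + c)"
  by (simp add: add.assoc [symmetric] ncl_commute [of a m k b])

lemma commutator_X_eq_0: "a \<in> ncl m k \<Longrightarrow> commutator a (X k) = 0"
  by (simp add: commutator_eq_0 ncl_commute [of a m k "X k"])

lemma ncl_commutator_add_left:
  assumes "a \<in> ncl m k" and "b \<in> ncl m k" and "y \<in> RF m"
  shows "commutator (a + b) y = commutator a y + commutator b y"
proof -
  have "commutator a y + b = b + commutator a y"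
    using assms by (simp add: ncl_commute [of _ m k b])
  then show ?thesis
    by (simp add: commutator_add_left conjugate_eq_self)
qed

lemma ncl_commutator_minus_left:
  assumes "a \<in> ncl m k" and "y \<in> RF m"
  shows "commutator (- a) y = - commutator a y"
proof -
  have "commutator a y + commutator (- a) y = 0"
    using ncl_commutator_add_left [of a m k "- a" y] assms by simp
  then show ?thesis by (simp add: minus_unique)
qed

lemma ncl_commutator_add_right:
  assumes "a \<in> ncl m k" and "b \<in> ncl m k" and "y \<in> RF m"
  shows "commutator y (a + b) = commutator y a + commutator y b"
proof -
  have "commutator y a + b = b + commutator y a"
    and "commutator y b + commutator y a = commutator y a + commutator y b"
    using assms by (simp_all add: ncl_commute [of _ m k])
  then show ?thesis
    by (simp add: commutator_add_right' conjugate_eq_self)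
qed

section \<open>A descending commutator series in the normal closure of the last generator\<close>

primrec ncl_series :: "nat \<Rightarrow> nat \<Rightarrow> rfgroup set" where
  "ncl_series m 0 = ncl m m"
| "ncl_series m (Suc r) =
     subgroup_generated {commutator e y | e y. e \<in> ncl_series m r \<and> y \<in> RF m}"

declare ncl_series.simps(2) [simp del]

lemma subgroup_ncl_series [simp]: "subgroup (ncl_series m r)"
  by (cases r) (simp_all add: ncl_series.simps(2))

lemma commutator_in_ncl_series [simp]:
  "e \<in> ncl_series m r \<Longrightarrow> y \<in> RF m \<Longrightarrow> commutator e y \<in> ncl_series m (Suc r)"
  by (auto simp: ncl_series.simps(2) intro!: subgroup_generated_base)

lemma ncl_series_subset_ncl: "ncl_series m r \<subseteq> ncl m m"
proof (induction r)
  case (Suc r)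
  then show ?case
    by (simp only: ncl_series.simps, intro subgroup_generated_minimal subset_refl)
      (auto intro!: commutator_in_ncl_left)
qed simp

lemma conjugate_in_ncl_series [simp]:
  "e \<in> ncl_series m r \<Longrightarrow> y \<in> RF m \<Longrightarrow> conjugate e y \<in> ncl_series m r"
proof (induction r arbitrary: e)
  case 0
  then show ?case by simp
next
  case (Suc r)
  have "subgroup {e. conjugate e y \<in> ncl_series m (Suc r)}"
    by (rule subgroupI) (simp_all add: conjugate_add conjugate_minus)
  moreover have "{commutator e y' | e y'. e \<in> ncl_series m r \<and> y' \<in> RF m}
      \<subseteq> {e. conjugate e y \<in> ncl_series m (Suc r)}"
    using Suc.IH \<open>y \<in> RF m\<close> by (auto simp: conjugate_commutator)
  ultimately have "ncl_series m (Suc r) \<subseteq> {e. conjugate e y \<in> ncl_series m (Suc r)}"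
    by (simp only: ncl_series.simps(2)) (rule subgroup_generated_minimal)
  with Suc.prems(1) show ?case by blast
qed

lemma ncl_series_Suc_subset: "ncl_series m (Suc r) \<subseteq> ncl_series m r"
  unfolding ncl_series.simps(2)
  by (rule subgroup_generated_minimal) (auto simp: commutator_conv_conjugate)

lemma commutator_commutator_in_ncl_series:
  assumes "e \<in> ncl_series m r" and "a \<in> RF m" and "b \<in> RF m"
  shows "commutator e (commutator a b) \<in> ncl_series m (Suc (Suc r))"
proof -
  define f where "f = conjugate e (- a + - b)"
  have f: "f \<in> ncl_series m r"
    using assms by (simp add: f_def)
  have e: "e = conjugate f (b + a)"
    by (simp add: f_def conjugate_conjugate add.assoc)
  have "f \<in> ncl m m"
    using f ncl_series_subset_ncl by blast
  then have "commutator f b \<in> ncl m m" and "commutator f a \<in> ncl m m"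
    using assms by simp_all
  then have "commutator (commutator f b) (commutator f a) = 0"
    by (simp add: commutator_eq_0 ncl_commute [of _ m m])
  then show ?thesis
    using f assms by (simp add: e commutator_conjugate_commutator)
qed

text \<open>The series reaches the trivial group after m steps: its r-th term is generated by elements
  lying, besides in the normal closure of x_m, in the normal closures of r further generators,
  because a commutator with a generator outside these enlarges the set by one.\<close>

definition ncl_meet :: "nat \<Rightarrow> nat set \<Rightarrow> rfgroup set" where
  "ncl_meet m S = ncl m m \<inter> (\<Inter>k\<in>S. ncl m k)"

definition ncl_depth :: "nat \<Rightarrow> nat \<Rightarrow> rfgroup set" where
  "ncl_depth m r = subgroup_generated (\<Union> {ncl_meet m S | S. S \<subseteq> {1..<m} \<and> r \<le> card S})"

lemma conjugate_in_ncl_meet: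
  "s \<in> ncl_meet m S \<Longrightarrow> y \<in> RF m \<Longrightarrow> conjugate s y \<in> ncl_meet m S"
  by (simp add: ncl_meet_def)

lemma ncl_meet_subset_depth:
  "S \<subseteq> {1..<m} \<Longrightarrow> r \<le> card S \<Longrightarrow> ncl_meet m S \<subseteq> ncl_depth m r"
  unfolding ncl_depth_def by (blast intro: subgroup_generated_base)

lemma subgroup_ncl_depth [simp]: "subgroup (ncl_depth m r)"
  by (simp add: ncl_depth_def)

lemma ncl_depth_antimono: "r \<le> r' \<Longrightarrow> ncl_depth m r' \<subseteq> ncl_depth m r"
  unfolding ncl_depth_def by (intro subgroup_generated_mono Union_mono) auto

lemma ncl_depth_trivial:
  assumes "0 < m"
  shows "ncl_depth m m = {0}"
proof -
  have "card S < m" if "S \<subseteq> {1..<m}" for S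
    using card_mono [OF _ that] assms by (simp add: less_le_trans)
  then have "{ncl_meet m S | S. S \<subseteq> {1..<m} \<and> m \<le> card S} = {}"
    by (auto simp: not_le [symmetric])
  then show ?thesis
    unfolding ncl_depth_def by (simp only: Union_empty subgroup_generated_empty)
qed

lemma commutator_ncl_meet_X:
  assumes s: "s \<in> ncl_meet m S" and S: "S \<subseteq> {1..<m}" and k: "1 \<le> k" "k \<le> m"
  shows "commutator s (X k) \<in> ncl_depth m (Suc (card S))"
proof (cases "k = m \<or> k \<in> S")
  case True
  then have "s \<in> ncl m k"
    using s by (auto simp: ncl_meet_def)
  then show ?thesis
    by (simp add: commutator_X_eq_0)
next
  case False
  then have k': "k \<notin> S" "insert k S \<subseteq> {1..<m}"
    using S k by auto
  have "s \<in> RF m"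
    using s ncl_subset_RF [of m m] k by (auto simp: ncl_meet_def)
  then have "conjugate (- X k) s + X k \<in> ncl m k"
    using k by (simp add: conjugate_minus)
  then have "commutator s (X k) \<in> ncl m k"
    by (simp add: commutator_def conjugate_def add.assoc)
  moreover have "commutator s (X k) \<in> ncl_meet m S"
    using s k by (simp add: ncl_meet_def)
  ultimately have "commutator s (X k) \<in> ncl_meet m (insert k S)"
    by (simp add: ncl_meet_def)
  moreover have "finite S"
    using S by (rule finite_subset) simp
  then have "card (insert k S) = Suc (card S)"
    using k'(1) by simp
  ultimately show ?thesis
    using ncl_meet_subset_depth [OF k'(2)] by auto
qed

lemma commutator_ncl_meet:
  "y \<in> RF m \<Longrightarrow> s \<in> ncl_meet m S \<Longrightarrow> S \<subseteq> {1..<m} \<Longrightarrow>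
    commutator s y \<in> ncl_depth m (Suc (card S))"
  by (rule commutator_RF_memI [of y m s "ncl_meet m S"])
    (simp_all add: conjugate_in_ncl_meet commutator_ncl_meet_X)

lemma commutator_in_ncl_depth:
  assumes "e \<in> ncl_depth m r" and y: "y \<in> RF m"
  shows "commutator e y \<in> ncl_depth m (Suc r)"
proof -
  let ?T = "{e \<in> ncl m m. commutator e y \<in> ncl_depth m (Suc r)}"
  have "subgroup ?T"
    using y by (intro subgroupI)
      (simp_all add: ncl_commutator_add_left [of _ m m] ncl_commutator_minus_left [of _ m m])
  moreover have "\<Union> {ncl_meet m S | S. S \<subseteq> {1..<m} \<and> r \<le> card S} \<subseteq> ?T"
  proof clarify
    fix s S assume "s \<in> ncl_meet m S" "S \<subseteq> {1..<m}" "r \<le> card S"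
    then show "s \<in> ncl m m \<and> commutator s y \<in> ncl_depth m (Suc r)"
      using commutator_ncl_meet [OF y] ncl_depth_antimono [of "Suc r" "Suc (card S)" m]
      by (auto simp: ncl_meet_def)
  qed
  ultimately have "ncl_depth m r \<subseteq> ?T"
    unfolding ncl_depth_def by (rule subgroup_generated_minimal)
  with assms(1) show ?thesis by blast
qed

lemma ncl_series_subset_depth: "ncl_series m r \<subseteq> ncl_depth m r"
proof (induction r)
  case 0
  have "ncl_meet m {} = ncl m m"
    by (simp add: ncl_meet_def)
  then show ?case
    using ncl_meet_subset_depth [of "{}" m 0] by simp
next
  case (Suc r)
  then show ?case
    unfolding ncl_series.simps(2)
    by (intro subgroup_generated_minimal) (auto intro: commutator_in_ncl_depth)
qed

lemma ncl_series_trivial: "0 < m \<Longrightarrow> ncl_series m m = {0}"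
  using ncl_series_subset_depth [of m m] ncl_depth_trivial [of m] subgroup_0 [of "ncl_series m m"]
  by auto

section \<open>Absorbing an element of the normal closure of the last generator\<close>

definition Xpow :: "nat \<Rightarrow> int \<Rightarrow> rfgroup" where
  "Xpow k a = abs_rfgroup (gpow k a)"

lemma Xpow_0 [simp]: "Xpow k 0 = 0"
  by (simp add: Xpow_def gpow_def abs_rfgroup_Nil)

lemma Xpow_succ: "Xpow k (a + 1) = X k + Xpow k a"
proof (cases "0 \<le> a")
  case True
  then have "gpow k (a + 1) = (k, False) # gpow k a"
    by (simp add: gpow_def nat_add_distrib)
  then show ?thesis by (simp add: Xpow_def abs_rfgroup_Cons)
next
  case False
  then have "nat (- a) = Suc (nat (- (a + 1)))"
    and "gpow k (a + 1) = replicate (nat (- (a + 1))) (k, True)"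
    by (auto simp: gpow_def)
  with False have "gpow k a = (k, True) # gpow k (a + 1)"
    by (simp add: gpow_def)
  then have "Xpow k a = - X k + Xpow k (a + 1)"
    by (simp add: Xpow_def abs_rfgroup_Cons)
  then show ?thesis by (simp add: add.assoc [symmetric])
qed

lemma Xpow_pred: "Xpow k (a - 1) = - X k + Xpow k a"
  using Xpow_succ [of k "a - 1"] by (simp add: add.assoc [symmetric])

lemma Xpow_add: "Xpow k (a + b) = Xpow k a + Xpow k b"
proof (induction a rule: int_induct [where k = 0])
  case (step1 i)
  have "Xpow k (i + 1 + b) = Xpow k ((i + b) + 1)"
    by (simp add: ac_simps)
  also have "\<dots> = Xpow k (i + 1) + Xpow k b"
    by (simp only: Xpow_succ step1.IH) (simp only: add.assoc)
  finally show ?case .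
next
  case (step2 i)
  have "Xpow k (i - 1 + b) = Xpow k ((i + b) - 1)"
    by (simp add: algebra_simps)
  also have "\<dots> = Xpow k (i - 1) + Xpow k b"
    by (simp only: Xpow_pred step2.IH) (simp only: add.assoc)
  finally show ?case .
qed simp

lemma Xpow_minus: "Xpow k (- a) = - Xpow k a"
  using Xpow_add [of k a "- a"] by (simp add: minus_unique)

lemma Xpow_in_subgroup: "subgroup T \<Longrightarrow> X k \<in> T \<Longrightarrow> Xpow k a \<in> T"
  by (induction a rule: int_induct [where k = 0]) (simp_all add: Xpow_succ Xpow_pred)

fun Xpows :: "nat \<Rightarrow> (nat \<Rightarrow> int) \<Rightarrow> rfgroup" where
  "Xpows 0 \<alpha> = 0"
| "Xpows (Suc n) \<alpha> = Xpow (Suc n) (\<alpha> (Suc n)) + Xpows n \<alpha>"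

lemma Xpows_cong: "(\<And>k. k \<le> n \<Longrightarrow> \<alpha> k = \<beta> k) \<Longrightarrow> Xpows n \<alpha> = Xpows n \<beta>"
  by (induction n) auto

lemma Xpows_in_RF: "Xpows n \<alpha> \<in> RF n"
proof (induction n)
  case (Suc n)
  have "Xpow (Suc n) (\<alpha> (Suc n)) \<in> RF (Suc n)"
    by (rule Xpow_in_subgroup) simp_all
  with Suc.IH RF_mono [of n "Suc n"] show ?case
    by auto
qed simp

definition zfactor :: "(nat \<Rightarrow> bool) \<Rightarrow> rfgroup \<Rightarrow> nat \<Rightarrow> rfgroup" where
  "zfactor c w k = (if c k then commutator w (X k) else commutator (X k) w)"

text \<open>Q is p z_1 ... z_{m-1} with z_k = g k. Replacing \<omega> k by \<omega> k + v k multiplies z_k by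
  change k (v k); moving these factors to the right conjugates each by the product G k of the
  later z's.\<close>

locale absorption =
  fixes m :: nat and c :: "nat \<Rightarrow> bool" and \<omega> :: "nat \<Rightarrow> rfgroup" and p :: rfgroup
  assumes m_pos: "0 < m"
    and \<omega>_in_RF: "\<And>k. k \<in> {1..<m} \<Longrightarrow> \<omega> k \<in> RF m"
    and p_in_RF: "p \<in> RF m"
begin

definition g :: "nat \<Rightarrow> rfgroup" where
  "g k = zfactor c (\<omega> k) k"

definition G :: "nat \<Rightarrow> rfgroup" where
  "G k = sum_list (map g [Suc k..<m])"

definition Q :: rfgroup where
  "Q = p + sum_list (map g [1..<m])"

definition change :: "nat \<Rightarrow> rfgroup \<Rightarrow> rfgroup" where
  "change k v = - g k + zfactor c (\<omega> k + v) k"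

definition total_change :: "(nat \<Rightarrow> rfgroup) \<Rightarrow> rfgroup" where
  "total_change v = sum_list (map (\<lambda>k. conjugate (change k (v k)) (G k)) [1..<m])"

text \<open>Adding an element of this set to Q amounts to putting a power of x_m in front and
  replacing each \<omega> k by \<omega> k + v k (lemma Q_add_ncl below).\<close>

definition absorbable :: "rfgroup set" where
  "absorbable = {conjugate (Xpow m a) Q + total_change v | a v. \<forall>k. v k \<in> ncl m m}"

lemma g_in_RF: "k \<in> {1..<m} \<Longrightarrow> g k \<in> RF m"
  using \<omega>_in_RF [of k] by (auto simp: g_def zfactor_def)

lemma sum_g_in_RF: "set ks \<subseteq> {1..<m} \<Longrightarrow> sum_list (map g ks) \<in> RF m"
  by (rule subgroup_sum_list) (auto simp: g_in_RF)

lemma G_in_RF: "G k \<in> RF m"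
  unfolding G_def by (rule sum_g_in_RF) auto

lemma Q_in_RF: "Q \<in> RF m"
  unfolding Q_def using p_in_RF sum_g_in_RF [of "[1..<m]"] by simp

lemma change_eq_commutators:
  "c k \<Longrightarrow> change k v = commutator (g k) v + commutator v (X k)"
  "\<not> c k \<Longrightarrow> change k v = conjugate (commutator (X k) v) (g k) + commutator (g k) v"
  by (simp_all add: change_def g_def zfactor_def commutator_def conjugate_def group_add_normalize)

lemma change_in_ncl: "k \<in> {1..<m} \<Longrightarrow> v \<in> ncl m m \<Longrightarrow> change k v \<in> ncl m m"
  using g_in_RF [of k] by (cases "c k") (simp_all add: change_eq_commutators)

lemma change_0 [simp]: "change k 0 = 0"
  by (simp add: change_def g_def)

lemma change_add:
  assumes k: "k \<in> {1..<m}" and v: "v \<in> ncl m m" and w: "w \<in> ncl m m"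
  shows "change k (v + w) = change k v + change k w"
proof -
  have H: "g k \<in> RF m" "X k \<in> RF m"
    using k g_in_RF by auto
  show ?thesis
  proof (cases "c k")
    case True
    have "commutator (g k) v + commutator (g k) w + (commutator v (X k) + commutator w (X k)) =
        commutator (g k) v + (commutator v (X k) + (commutator (g k) w + commutator w (X k)))"
      using H v w by (simp add: add.assoc ncl_add_left_commute [of "commutator (g k) w" m m])
    with True H v w show ?thesis
      by (simp add: change_eq_commutators ncl_commutator_add_left [of _ m m]
          ncl_commutator_add_right [of _ m m] add.assoc)
  next
    case False
    let ?C = "\<lambda>v. conjugate (commutator (X k) v) (g k)"
    have "?C v + ?C w + (commutator (g k) v + commutator (g k) w) =
        ?C v + (commutator (g k) v + (?C w + commutator (g k) w))"
      using H v w by (simp add: add.assoc ncl_add_left_commute [of "?C w" m m])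
    with False H v w show ?thesis
      by (simp add: change_eq_commutators ncl_commutator_add_right [of _ m m] conjugate_add
          add.assoc)
  qed
qed

lemma conjugate_change_in_ncl:
  "k \<in> {1..<m} \<Longrightarrow> v \<in> ncl m m \<Longrightarrow> conjugate (change k v) (G k) \<in> ncl m m"
  by (simp add: change_in_ncl G_in_RF)

lemma total_change_add:
  assumes "\<And>k. v k \<in> ncl m m" and "\<And>k. w k \<in> ncl m m"
  shows "total_change (\<lambda>k. v k + w k) = total_change v + total_change w"
proof -
  let ?F = "\<lambda>v k. conjugate (change k (v k)) (G k)"
  have "total_change (\<lambda>k. v k + w k) = sum_list (map (\<lambda>k. ?F v k + ?F w k) [1..<m])"
    unfolding total_change_def
    by (rule arg_cong [where f = sum_list], rule map_cong) (simp_all add: assms change_add conjugate_add)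
  also have "\<dots> = total_change v + total_change w"
    unfolding total_change_def
    by (rule sum_list_add_commuting) (simp add: assms conjugate_change_in_ncl ncl_commute [of _ m m])
  finally show ?thesis .
qed

lemma total_change_0: "total_change (\<lambda>_. 0) = 0"
  by (simp add: total_change_def sum_list_map_single)

lemma total_change_minus:
  assumes "\<And>k. v k \<in> ncl m m"
  shows "total_change (\<lambda>k. - v k) = - total_change v"
  using total_change_add [of v "\<lambda>k. - v k"] assms by (simp add: total_change_0 minus_unique)

lemma total_change_single:
  "k \<in> {1..<m} \<Longrightarrow> total_change ((\<lambda>_. 0)(k := u)) = conjugate (change k u) (G k)"
  unfolding total_change_def by (subst sum_list_map_single [of _ k]) auto

lemma total_change_in_ncl: "(\<And>k. v k \<in> ncl m m) \<Longrightarrow> total_change v \<in> ncl m m"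
  unfolding total_change_def by (rule subgroup_sum_list) (simp_all add: conjugate_change_in_ncl)

lemma subgroup_absorbable: "subgroup absorbable"
proof (rule subgroupI)
  show "0 \<in> absorbable"
    unfolding absorbable_def
    by (intro CollectI exI [of _ 0] exI [of _ "\<lambda>_. 0"]) (simp add: total_change_0)
next
  fix x y assume "x \<in> absorbable" "y \<in> absorbable"
  then obtain a v b w where
    x: "x = conjugate (Xpow m a) Q + total_change v" and v: "\<forall>k. v k \<in> ncl m m" and
    y: "y = conjugate (Xpow m b) Q + total_change w" and w: "\<forall>k. w k \<in> ncl m m"
    unfolding absorbable_def by blast
  have "x + y = conjugate (Xpow m (a + b)) Q + total_change (\<lambda>k. v k + w k)"
    using x y v w Q_in_RF
    by (simp add: total_change_add Xpow_add conjugate_add add.assoc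
        ncl_add_left_commute [of "total_change v" m m] total_change_in_ncl Xpow_in_subgroup)
  with v w show "x + y \<in> absorbable"
    unfolding absorbable_def
    by (intro CollectI exI [of _ "a + b"] exI [of _ "\<lambda>k. v k + w k"]) simp
next
  fix x assume "x \<in> absorbable"
  then obtain a v where x: "x = conjugate (Xpow m a) Q + total_change v"
    and v: "\<forall>k. v k \<in> ncl m m"
    unfolding absorbable_def by blast
  have "- x = conjugate (Xpow m (- a)) Q + total_change (\<lambda>k. - v k)"
    using x v Q_in_RF
    by (simp add: minus_add total_change_minus Xpow_minus conjugate_minus
        ncl_commute [of "- total_change v" m m] total_change_in_ncl Xpow_in_subgroup)
  with v show "- x \<in> absorbable"
    unfolding absorbable_def
    by (intro CollectI exI [of _ "- a"] exI [of _ "\<lambda>k. - v k"]) simp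
qed

lemma conjugate_X_Q_in_absorbable: "conjugate (X m) Q \<in> absorbable"
  unfolding absorbable_def
  by (intro CollectI exI [of _ 1] exI [of _ "\<lambda>_. 0"]) (simp add: total_change_0 Xpow_succ [of m 0, simplified])

lemma conjugate_change_in_absorbable:
  "k \<in> {1..<m} \<Longrightarrow> u \<in> ncl m m \<Longrightarrow> conjugate (change k u) (G k) \<in> absorbable"
  unfolding absorbable_def
  by (intro CollectI exI [of _ 0] exI [of _ "(\<lambda>_. 0)(k := u)"]) (simp add: total_change_single)

lemma commutator_g_in_ncl_series:
  assumes "k \<in> {1..<m}" and "e \<in> ncl_series m r"
  shows "commutator (g k) e \<in> ncl_series m (Suc (Suc r))"
  using assms \<omega>_in_RF [of k] commutator_commutator_in_ncl_series [of e m r]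
  by (cases "c k") (auto simp: g_def zfactor_def commutator_swap [of _ e])

lemma change_in_ncl_series:
  assumes k: "k \<in> {1..<m}" and e: "e \<in> ncl_series m r"
  shows "change k e \<in> ncl_series m (Suc r)"
proof -
  have H: "X k \<in> RF m" "g k \<in> RF m"
    using k g_in_RF by auto
  have "commutator (g k) e \<in> ncl_series m (Suc r)"
    using commutator_g_in_ncl_series [OF k e] ncl_series_Suc_subset by blast
  moreover have Xe: "commutator (X k) e \<in> ncl_series m (Suc r)"
    using e H by (simp add: commutator_swap [of "X k" e])
  moreover have "commutator (commutator (X k) e) (g k) \<in> ncl_series m (Suc r)"
    using Xe H ncl_series_Suc_subset [of m r] by auto
  ultimately show ?thesis
    using e H by (cases "c k") (simp_all add: change_eq_commutators conjugate_eq_add_commutator)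
qed

text \<open>Modulo the next-but-one term of the series, the change caused by v k = e is the
  commutator of e with x_k (up to sign).\<close>

lemma commutator_X_in_absorbable:
  assumes k: "k \<in> {1..<m}" and e: "e \<in> ncl_series m r"
    and sub: "ncl_series m (Suc (Suc r)) \<subseteq> absorbable"
  shows "commutator e (X k) \<in> absorbable"
proof -
  have H: "X k \<in> RF m" "g k \<in> RF m" "G k \<in> RF m"
    using k g_in_RF G_in_RF by auto
  have "e \<in> ncl m m"
    using e ncl_series_subset_ncl by blast
  then have t: "conjugate (change k e) (G k) \<in> absorbable"
    using k by (rule conjugate_change_in_absorbable [rotated])
  have "commutator (g k) e \<in> ncl_series m (Suc (Suc r))"
    and "commutator (change k e) (G k) \<in> ncl_series m (Suc (Suc r))"
    and "commutator (commutator (X k) e) (g k) \<in> ncl_series m (Suc (Suc r))"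
    using commutator_g_in_ncl_series [OF k e] change_in_ncl_series [OF k e] e H
    by (simp_all add: commutator_swap [of "X k" e])
  with sub have absorbed: "commutator (g k) e \<in> absorbable"
    "commutator (change k e) (G k) \<in> absorbable"
    "commutator (commutator (X k) e) (g k) \<in> absorbable"
    by auto
  show ?thesis
  proof (cases "c k")
    case True
    have "commutator e (X k) =
        - commutator (g k) e + conjugate (change k e) (G k) + - commutator (change k e) (G k)"
      using True by (simp add: change_eq_commutators conjugate_eq_add_commutator add.assoc)
    then show ?thesis
      using t absorbed subgroup_absorbable by simp
  next
    case False
    have eq: "commutator (X k) e =
        conjugate (change k e) (G k) + - commutator (change k e) (G k) + - commutator (g k) e +
        - commutator (commutator (X k) e) (g k)"
      using False by (simp add: change_eq_commutators conjugate_eq_add_commutator add.assoc)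
    have "commutator (X k) e \<in> absorbable"
      using t absorbed subgroup_absorbable by (subst eq) simp
    then show ?thesis
      using subgroup_absorbable by (simp add: commutator_swap [of e])
  qed
qed

lemma commutator_in_absorbable:
  assumes "y \<in> RF m" and "e \<in> ncl_series m r"
    and "ncl_series m (Suc (Suc r)) \<subseteq> absorbable"
  shows "commutator e y \<in> absorbable"
proof (rule commutator_RF_memI [OF assms(1,2) subgroup_absorbable])
  fix e k assume e: "e \<in> ncl_series m r" and k: "1 \<le> k" "k \<le> m"
  show "commutator e (X k) \<in> absorbable"
  proof (cases "k = m")
    case True
    have "e \<in> ncl m m"
      using e ncl_series_subset_ncl by blast
    with True show ?thesis
      using subgroup_absorbable by (simp add: commutator_X_eq_0)
  next
    case False
    with k e assms(3) show ?thesis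
      by (intro commutator_X_in_absorbable) auto
  qed
qed simp

lemma ncl_series_subset_absorbable_step:
  assumes "ncl_series m (Suc r) \<subseteq> absorbable"
  shows "ncl_series m r \<subseteq> absorbable"
proof (cases r)
  case 0
  have "conjugate (X m) h \<in> absorbable" if "h \<in> RF m" for h
  proof -
    have "commutator (X m) Q \<in> absorbable" and "commutator (X m) h \<in> absorbable"
      using assms 0 that Q_in_RF by auto
    moreover have "conjugate (X m) h =
        conjugate (X m) Q + (- commutator (X m) Q + commutator (X m) h)"
      by (simp add: conjugate_eq_add_commutator add.assoc)
    ultimately show ?thesis
      using conjugate_X_Q_in_absorbable subgroup_absorbable by simp
  qed
  then have "ncl m m \<subseteq> absorbable"
    unfolding ncl_def by (intro subgroup_generated_minimal [OF subgroup_absorbable]) blast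
  with 0 show ?thesis by simp
next
  case (Suc r')
  show ?thesis
    unfolding Suc ncl_series.simps(2)
    by (rule subgroup_generated_minimal [OF subgroup_absorbable])
      (use assms Suc commutator_in_absorbable in blast)
qed

lemma ncl_subset_absorbable: "ncl m m \<subseteq> absorbable"
proof -
  have "ncl_series m r \<subseteq> absorbable" if "r \<le> m" for r
    using that
  proof (induction r rule: inc_induct)
    case base
    then show ?case
      using m_pos subgroup_absorbable by (simp add: ncl_series_trivial)
  next
    case (step r)
    from step(3) show ?case
      by (rule ncl_series_subset_absorbable_step)
  qed
  from this [of 0] show ?thesis by simp
qed

lemma Q_add_ncl:
  assumes "e \<in> ncl m m"
  obtains a v where "\<forall>k. v k \<in> ncl m m"
    and "Q + e = Xpow m a + p + sum_list (map (\<lambda>k. zfactor c (\<omega> k + v k) k) [1..<m])"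
proof -
  obtain a v where v: "\<forall>k. v k \<in> ncl m m" and e: "e = conjugate (Xpow m a) Q + total_change v"
    using assms ncl_subset_absorbable unfolding absorbable_def by blast
  have "Q + e = Xpow m a + (Q + total_change v)"
    by (simp add: e add.assoc [symmetric] add_conjugate [symmetric])
  also have "Q + total_change v =
      p + sum_list (map (\<lambda>k. g k + change k (v k)) [1..<m])"
    unfolding Q_def total_change_def G_def by (simp add: sum_list_add_conjugate add.assoc)
  also have "(\<lambda>k. g k + change k (v k)) = (\<lambda>k. zfactor c (\<omega> k + v k) k)"
    by (simp add: change_def add.assoc [symmetric])
  finally show ?thesis
    using v that by (simp add: add.assoc)
qed

end

section \<open>The normal form\<close>

lemma RF_ncl_add_decomposition:
  assumes s: "s \<in> RF n \<union> ncl (Suc n) (Suc n)" and y: "y \<in> RF n" and e: "e \<in> ncl (Suc n) (Suc n)"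
  shows "\<exists>y' e'. y' \<in> RF n \<and> e' \<in> ncl (Suc n) (Suc n) \<and> s + (y + e) = y' + e'"
  using s
proof
  assume "s \<in> RF n"
  with y e show ?thesis
    by (intro exI [of _ "s + y"] exI [of _ e]) (simp add: add.assoc)
next
  assume "s \<in> ncl (Suc n) (Suc n)"
  moreover have "y \<in> RF (Suc n)"
    using y RF_mono [of n "Suc n"] by auto
  ultimately show ?thesis
    using y e add_conjugate [of s y]
    by (intro exI [of _ y] exI [of _ "conjugate s y + e"]) (simp add: add.assoc [symmetric])
qed

lemma RF_Suc_decompose:
  "x \<in> RF (Suc n) \<Longrightarrow> \<exists>y e. y \<in> RF n \<and> e \<in> ncl (Suc n) (Suc n) \<and> x = y + e"
proof (induction rule: RF_induct)
  case zero
  show ?case by (intro exI [of _ 0]) simp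
next
  case (plus k h)
  then obtain y e where y: "y \<in> RF n" and e: "e \<in> ncl (Suc n) (Suc n)" and h: "h = y + e"
    by blast
  have "X k \<in> RF n \<union> ncl (Suc n) (Suc n)"
    using plus.hyps by (cases "k = Suc n") auto
  from RF_ncl_add_decomposition [OF this y e] show ?case
    by (simp only: h)
next
  case (minus k h)
  then obtain y e where y: "y \<in> RF n" and e: "e \<in> ncl (Suc n) (Suc n)" and h: "h = y + e"
    by blast
  have "- X k \<in> RF n \<union> ncl (Suc n) (Suc n)"
    using minus.hyps by (cases "k = Suc n") auto
  from RF_ncl_add_decomposition [OF this y e] show ?case
    by (simp only: h)
qed

lemma sum_zfactor_fun_upd:
  "sum_list (map (\<lambda>k. zfactor c ((\<omega>(n := 0)) k) k) [1..<Suc n]) =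
    sum_list (map (\<lambda>k. zfactor c (\<omega> k) k) [1..<n])"
proof (cases n)
  case (Suc n')
  then have split: "[1..<Suc n] = [1..<n] @ [n]" by simp
  have init: "map (\<lambda>k. zfactor c ((\<omega>(n := 0)) k) k) [1..<n] = map (\<lambda>k. zfactor c (\<omega> k) k) [1..<n]"
    by (rule map_cong) auto
  have last: "zfactor c ((\<omega>(n := 0)) n) n = 0"
    by (simp add: zfactor_def)
  show ?thesis
    by (simp only: split map_append init list.map last sum_list_append sum_list.Cons
        sum_list.Nil add_0_right)
qed simp

lemma normal_form_Suc:
  assumes \<omega>: "\<forall>k\<in>{1..<n}. \<omega> k \<in> RF n" and e: "e \<in> ncl (Suc n) (Suc n)"
  shows "\<exists>\<alpha>' \<omega>'. (\<forall>k\<in>{1..<Suc n}. \<omega>' k \<in> RF (Suc n)) \<and>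
    Xpows n \<alpha> + sum_list (map (\<lambda>k. zfactor c (\<omega> k) k) [1..<n]) + e =
    Xpows (Suc n) \<alpha>' + sum_list (map (\<lambda>k. zfactor c (\<omega>' k) k) [1..<Suc n])"
proof -
  txt \<open>The new factor z_n starts out trivial.\<close>
  let ?\<omega>0 = "\<omega>(n := 0)"
  have \<omega>0: "?\<omega>0 k \<in> RF (Suc n)" if "k \<in> {1..<Suc n}" for k
    using that \<omega> RF_mono [of n "Suc n"] by auto
  interpret absorption "Suc n" c ?\<omega>0 "Xpows n \<alpha>"
    using \<omega>0 Xpows_in_RF [of n \<alpha>] RF_mono [of n "Suc n"] by unfold_locales auto
  have Q: "Q = Xpows n \<alpha> + sum_list (map (\<lambda>k. zfactor c (\<omega> k) k) [1..<n])"
    unfolding Q_def g_def by (simp only: sum_zfactor_fun_upd)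
  obtain a v where v: "\<forall>k. v k \<in> ncl (Suc n) (Suc n)"
    and Q_add_e: "Q + e = Xpow (Suc n) a + Xpows n \<alpha> +
      sum_list (map (\<lambda>k. zfactor c (?\<omega>0 k + v k) k) [1..<Suc n])"
    using Q_add_ncl [OF e] by blast
  have "Xpows (Suc n) (\<alpha>(Suc n := a)) = Xpow (Suc n) a + Xpows n \<alpha>"
    using Xpows_cong [of n "\<alpha>(Suc n := a)" \<alpha>] by simp
  moreover have "?\<omega>0 k + v k \<in> RF (Suc n)" if "k \<in> {1..<Suc n}" for k
  proof -
    have "v k \<in> RF (Suc n)"
      using v ncl_subset_RF [of "Suc n" "Suc n"] by auto
    with \<omega>0 [OF that] show ?thesis
      by (rule subgroup_add [OF subgroup_RF])
  qed
  ultimately show ?thesis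
    using Q_add_e unfolding Q
    by (intro exI [of _ "\<alpha>(Suc n := a)"] exI [of _ "\<lambda>k. ?\<omega>0 k + v k"]) simp
qed

lemma normal_form_RF:
  "x \<in> RF n \<Longrightarrow> \<exists>\<alpha> \<omega>. (\<forall>k\<in>{1..<n}. \<omega> k \<in> RF n) \<and>
    x = Xpows n \<alpha> + sum_list (map (\<lambda>k. zfactor c (\<omega> k) k) [1..<n])"
proof (induction n arbitrary: x)
  case 0
  then show ?case by (simp add: RF_0)
next
  case (Suc n)
  obtain y e where y: "y \<in> RF n" and e: "e \<in> ncl (Suc n) (Suc n)" and x: "x = y + e"
    using RF_Suc_decompose [OF Suc.prems] by blast
  obtain \<alpha> \<omega> where \<omega>: "\<forall>k\<in>{1..<n}. \<omega> k \<in> RF n"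
    and y_eq: "y = Xpows n \<alpha> + sum_list (map (\<lambda>k. zfactor c (\<omega> k) k) [1..<n])"
    using Suc.IH [OF y] by blast
  show ?case
    using normal_form_Suc [OF \<omega> e, of \<alpha> c] unfolding x y_eq .
qed

lemma alphabet_append [simp]: "alphabet m (u @ v) \<longleftrightarrow> alphabet m u \<and> alphabet m v"
  by (auto simp: alphabet_def)

lemma alphabet_concat [simp]: "alphabet m (concat ws) \<longleftrightarrow> (\<forall>w\<in>set ws. alphabet m w)"
  by (auto simp: alphabet_def)

lemma alphabet_inv_word [simp]: "alphabet m (inv_word w) \<longleftrightarrow> alphabet m w"
  by (auto simp: alphabet_def inv_word_def)

lemma alphabet_gen: "alphabet m (gen k) \<longleftrightarrow> 1 \<le> k \<and> k \<le> m"
  by (simp add: alphabet_def gen_def)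

lemma alphabet_gpow: "1 \<le> k \<Longrightarrow> k \<le> m \<Longrightarrow> alphabet m (gpow k a)"
  by (simp add: alphabet_def gpow_def)

definition normal_form_word :: "nat \<Rightarrow> (nat \<Rightarrow> bool) \<Rightarrow> (nat \<Rightarrow> int) \<Rightarrow> (nat \<Rightarrow> word) \<Rightarrow> word" where
  "normal_form_word m c \<alpha> \<omega> =
     concat (map (\<lambda>k. gpow k (\<alpha> k)) (rev [1..<Suc m])) @
     concat (map (\<lambda>k. if c k then comm (\<omega> k) (gen k) else comm (gen k) (\<omega> k)) [1..<m])"

lemma abs_rfgroup_gpows:
  "abs_rfgroup (concat (map (\<lambda>k. gpow k (\<alpha> k)) (rev [1..<Suc m]))) = Xpows m \<alpha>"
  by (induction m) (simp_all add: abs_rfgroup_Nil abs_rfgroup_append Xpow_def)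

lemma abs_rfgroup_normal_form_word:
  "abs_rfgroup (normal_form_word m c \<alpha> \<omega>) =
    Xpows m \<alpha> + sum_list (map (\<lambda>k. zfactor c (abs_rfgroup (\<omega> k)) k) [1..<m])"
proof -
  have "map abs_rfgroup (map (\<lambda>k. if c k then comm (\<omega> k) (gen k) else comm (gen k) (\<omega> k)) [1..<m])
      = map (\<lambda>k. zfactor c (abs_rfgroup (\<omega> k)) k) [1..<m]"
    by (auto simp: zfactor_def abs_rfgroup_comm X_def)
  then show ?thesis
    unfolding normal_form_word_def abs_rfgroup_append abs_rfgroup_gpows abs_rfgroup_concat [of "map _ [1..<m]"]
    by (simp only:)
qed

lemma alphabet_normal_form_word:
  assumes "\<forall>k\<in>{1..<m}. alphabet m (\<omega> k)"
  shows "alphabet m (normal_form_word m c \<alpha> \<omega>)"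
proof -
  have "alphabet m (concat (map (\<lambda>k. gpow k (\<alpha> k)) (rev [1..<Suc m])))"
    by (auto intro: alphabet_gpow)
  moreover have "alphabet m (if c k then comm (\<omega> k) (gen k) else comm (gen k) (\<omega> k))"
    if "k \<in> {1..<m}" for k
    using that assms by (simp add: comm_def alphabet_gen)
  ultimately show ?thesis
    unfolding normal_form_word_def alphabet_append alphabet_concat set_map set_upt by blast
qed

lemma normal_form_word_exists:
  assumes "alphabet m x"
  shows "\<exists>\<alpha> \<omega>. (\<forall>k\<in>{1..<m}. alphabet m (\<omega> k)) \<and>
    abs_rfgroup x = abs_rfgroup (normal_form_word m c \<alpha> \<omega>)"
proof -
  have "abs_rfgroup x \<in> RF m"
    using assms unfolding RF_def by blast
  from normal_form_RF [OF this, of c] obtain \<alpha> \<omega> where \<omega>: "\<forall>k\<in>{1..<m}. \<omega> k \<in> RF m"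
    and x: "abs_rfgroup x = Xpows m \<alpha> + sum_list (map (\<lambda>k. zfactor c (\<omega> k) k) [1..<m])"
    by blast
  have "\<forall>k\<in>{1..<m}. \<exists>w. alphabet m w \<and> abs_rfgroup w = \<omega> k"
    using \<omega> unfolding RF_def by fastforce
  from bchoice [OF this] obtain \<omega>w
    where \<omega>w: "\<forall>k\<in>{1..<m}. alphabet m (\<omega>w k) \<and> abs_rfgroup (\<omega>w k) = \<omega> k"
    by blast
  then have "map (\<lambda>k. zfactor c (abs_rfgroup (\<omega>w k)) k) [1..<m] = map (\<lambda>k. zfactor c (\<omega> k) k) [1..<m]"
    by simp
  then have "abs_rfgroup x = abs_rfgroup (normal_form_word m c \<alpha> \<omega>w)"
    by (simp only: x abs_rfgroup_normal_form_word)
  with \<omega>w show ?thesis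
    by blast
qed

theorem theorem4p1:
  fixes m :: nat and x :: word and c :: "nat \<Rightarrow> bool"
  assumes "1 \<le> m" and "alphabet m x"
  shows "\<exists>(\<alpha> :: nat \<Rightarrow> int) (\<omega> :: nat \<Rightarrow> word).
           (\<forall>k \<in> {1..<m}. alphabet m (\<omega> k)) \<and>
           rf_eq m x
             (concat (map (\<lambda>k. gpow k (\<alpha> k)) (rev [1..<Suc m])) @
              concat (map (\<lambda>k. if c k then comm (\<omega> k) (gen k) else comm (gen k) (\<omega> k))
                          [1..<m]))"
proof -
  obtain \<alpha> \<omega> where \<omega>: "\<forall>k\<in>{1..<m}. alphabet m (\<omega> k)"
    and eq: "abs_rfgroup x = abs_rfgroup (normal_form_word m c \<alpha> \<omega>)"
    using normal_form_word_exists [OF assms(2)] by blast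
  have "rf_eq m x (normal_form_word m c \<alpha> \<omega>)"
    using assms(2) alphabet_normal_form_word [OF \<omega>] eq by (rule rf_eq_if_abs_rfgroup_eq)
  with \<omega> show ?thesis
    unfolding normal_form_word_def by blast
qed

end
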